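(* Let $1<r\le\infty$, let $A,B\in\mathrm{M}_2(\mathbb{C})$, and let $G:\{z\in\mathbb{C}:|z|<r\}\to\mathrm{M}_2(\mathbb{C})$ be holomorphic with $G(z)=\sum_{k=0}^\infty z^kG_k$ for $|z|<1$. Suppose $a_0\neq 0$ is an eigenvector of $A$ for the eigenvalue $\alpha_0$ and that $A-\alpha_0-k$ is invertible for every positive integer $k$, and let $\beta_1$ be an eigenvalue of $B$. Let $y_0(z)=z^{\alpha_0}h_0(z)$ be the Floquet solution of $$y'(z)=\Big(\tfrac{1}{z}A+\tfrac{1}{z-1}B+G(z)\Big)y(z)$$ with $h_0$ holomorphic on $\{|z|<r\}\setminus[1,r[$ and $h_0(0)=a_0$, and write $\eta_0(z):=(1-z)^{-\beta_1-1}h_0(z)=\sum_{k=0}^\infty z^kd_k$ for $|z|<1$ (so $d_0=a_0$). Put $A_0:=A-\alpha_0$ and $A_1:=B-\beta_1-1$. Then the coefficients $d_k$ can be computed by the two-step recurrence $$u_k:=(A_0-k)^{-1}\Big((A_1+1)d_{k-1}-\sum_{\ell=0}^{k-1}G_{k-1-\ell}u_\ell\Big),\qquad d_k:=d_{k-1}+u_k\qquad (k=1,2,3,\ldots),$$ starting with $u_0=d_0:=a_0$.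
   Context: Powers are principal branches: $z^{\alpha}$ with $-\pi<\arg z<\pi$ and $(1-z)^{\beta}$ with $-\pi<\arg(1-z)<\pi$. The function $\eta_0$ is the holomorphic solution on the unit disk of the transformed system $\eta'(z)=\big(\frac{1}{z}A_0+\frac{1}{z-1}A_1+G(z)\big)\eta(z)$ obtained via $y(z)=z^{\alpha_0}(1-z)^{\beta_1+1}\eta(z)$. *)

theory Defs
  imports "HOL-Analysis.Analysis"
begin

definition vec_holomorphic_on :: "(complex \<Rightarrow> complex^'n) \<Rightarrow> complex set \<Rightarrow> bool" where
  "vec_holomorphic_on f S \<longleftrightarrow> (\<forall>i. (\<lambda>z. f z $ i) holomorphic_on S)"

definition mat_holomorphic_on :: "(complex \<Rightarrow> complex^'n^'m) \<Rightarrow> complex set \<Rightarrow> bool" where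
  "mat_holomorphic_on f S \<longleftrightarrow> (\<forall>i j. (\<lambda>z. f z $ i $ j) holomorphic_on S)"

definition vec_has_cderiv :: "(complex \<Rightarrow> complex^'n) \<Rightarrow> complex^'n \<Rightarrow> complex \<Rightarrow> bool" where
  "vec_has_cderiv f f' z \<longleftrightarrow> (\<forall>i. ((\<lambda>w. f w $ i) has_field_derivative (f' $ i)) (at z))"

fun ud_rec :: "complex^2^2 \<Rightarrow> complex^2^2 \<Rightarrow> (nat \<Rightarrow> complex^2^2) \<Rightarrow> complex^2
                 \<Rightarrow> nat \<Rightarrow> (complex^2) list \<times> (complex^2)" where
  "ud_rec A0 A1 Gk a0 0 = ([a0], a0)"
| "ud_rec A0 A1 Gk a0 (Suc k) =
     (let (us, d) = ud_rec A0 A1 Gk a0 k;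
          u = matrix_inv (A0 - mat (of_nat (Suc k))) *v
                ((A1 + mat 1) *v d - (\<Sum>l\<le>k. Gk (k - l) *v (us ! l)))
      in (us @ [u], d + u))"

definition rec_d :: "complex^2^2 \<Rightarrow> complex^2^2 \<Rightarrow> (nat \<Rightarrow> complex^2^2) \<Rightarrow> complex^2 \<Rightarrow> nat \<Rightarrow> complex^2" where
  "rec_d A0 A1 Gk a0 k = snd (ud_rec A0 A1 Gk a0 k)"

end

theory Submission
  imports Defs "HOL-Complex_Analysis.Complex_Analysis"
begin

text \<open>
  Write h0 = (1 - z) powr (\<beta>1 + 1) \<eta>0. On the lens 0 < Re z < 1 of the unit disc, away from both
  branch cuts, substituting y0 = z powr \<alpha>0 (1 - z) powr (\<beta>1 + 1) \<eta>0 into the ODE and clearing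
  denominators gives
    z (1 - z) \<eta>0' = (1 - z) A0 \<eta>0 - z A1 \<eta>0 + z G(z) (1 - z) \<eta>0.
  Both sides are power series converging on the unit disc, so by analytic continuation the
  corresponding formal power series agree. The coefficient of z^(k+1) reads
    (A0 - k - 1) (d_(k+1) - d_k) = (A1 + 1) d_k - \<Sum>l\<le>k. G_(k-l) u_l,
  where u_l are the coefficients of (1 - z) \<eta>0, i.e. u_0 = d_0 and u_l = d_l - d_(l-1).
  Since A0 - k - 1 is invertible, this is exactly the two-step recurrence.
\<close>

unbundle no Formal_Power_Series.fps_syntax

lemma matrix_vector_mult_mat: "mat c *v x = c *s (x :: 'a::comm_semiring_1^'n)"
  by (simp add: vec_eq_iff matrix_vector_mult_def mat_def if_distrib if_distribR sum.delta
      cong: if_cong)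

lemma matrix_mult_mat_left_row: "(mat c ** M) $ i = c *s ((M :: 'a::comm_semiring_1^'n^'m) $ i)"
  by (simp add: vec_eq_iff matrix_matrix_mult_def mat_def if_distrib if_distribR sum.delta
      cong: if_cong)

lemma mat_add: "mat (a + b) = mat a + (mat b :: 'a::semiring_1^'n^'n)"
  by (simp add: vec_eq_iff mat_def)

lemma matrix_inv_left:
  fixes M :: "'a::semiring_1^'n^'m"
  assumes "invertible M"
  shows "matrix_inv M ** M = mat 1"
  using someI_ex[OF assms[unfolded invertible_def]] unfolding matrix_inv_def by blast

lemma has_field_derivative_powr_prefactor:
  fixes z \<alpha> \<beta> f' :: complex
  assumes "0 < Re z" "Re z < 1" "(f has_field_derivative f') (at z)"
  shows "((\<lambda>w. w powr \<alpha> * (1 - w) powr \<beta> * f w) has_field_derivative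
           z powr \<alpha> * (1 - z) powr \<beta> * (\<alpha> / z * f z - \<beta> / (1 - z) * f z + f')) (at z)"
proof -
  have "z \<notin> \<real>\<^sub>\<le>\<^sub>0" "1 - z \<notin> \<real>\<^sub>\<le>\<^sub>0" "z \<noteq> 0" "1 - z \<noteq> 0"
    using assms(1,2) by (auto simp: complex_nonpos_Reals_iff)
  then show ?thesis
    by (auto intro!: derivative_eq_intros assms(3) simp: powr_diff field_simps)
qed

lemma vec_has_cderiv_powr_prefactor:
  assumes "0 < Re z" "Re z < 1" "vec_has_cderiv \<eta> \<eta>' z"
  shows "vec_has_cderiv (\<lambda>w. (w powr \<alpha> * (1 - w) powr \<beta>) *s \<eta> w)
           ((z powr \<alpha> * (1 - z) powr \<beta>) *s (\<alpha> / z *s \<eta> z - \<beta> / (1 - z) *s \<eta> z + \<eta>')) z"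
  unfolding vec_has_cderiv_def
proof
  fix i
  have "((\<lambda>w. w powr \<alpha> * (1 - w) powr \<beta> * \<eta> w $ i) has_field_derivative
      z powr \<alpha> * (1 - z) powr \<beta> * (\<alpha> / z * \<eta> z $ i - \<beta> / (1 - z) * \<eta> z $ i + \<eta>' $ i)) (at z)"
    using assms(3) unfolding vec_has_cderiv_def
    by (intro has_field_derivative_powr_prefactor assms(1,2)) blast
  then show "((\<lambda>w. ((w powr \<alpha> * (1 - w) powr \<beta>) *s \<eta> w) $ i) has_field_derivative
      ((z powr \<alpha> * (1 - z) powr \<beta>) *s (\<alpha> / z *s \<eta> z - \<beta> / (1 - z) *s \<eta> z + \<eta>')) $ i) (at z)"
    by (simp add: algebra_simps)
qed

lemma vec_has_cderiv_unique:
  assumes "vec_has_cderiv f a z" "vec_has_cderiv f b z"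
  shows "a = b"
proof (rule vec_eq_iff[THEN iffD2], intro allI)
  fix i
  have "((\<lambda>w. f w $ i) has_field_derivative a $ i) (at z)"
    and "((\<lambda>w. f w $ i) has_field_derivative b $ i) (at z)"
    using assms unfolding vec_has_cderiv_def by simp_all
  then show "a $ i = b $ i"
    by (rule DERIV_unique)
qed

lemma vec_has_cderiv_transform_within_open:
  assumes "vec_has_cderiv f f' z" "open S" "z \<in> S" "\<And>w. w \<in> S \<Longrightarrow> f w = g w"
  shows "vec_has_cderiv g f' z"
  unfolding vec_has_cderiv_def
proof
  fix i
  from assms(1) have "((\<lambda>w. f w $ i) has_field_derivative f' $ i) (at z)"
    unfolding vec_has_cderiv_def by (rule spec)
  then show "((\<lambda>w. g w $ i) has_field_derivative f' $ i) (at z)"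
    by (rule has_field_derivative_transform_within_open[OF _ assms(2,3)]) (simp add: assms(4))
qed

lemma transformed_ode_clear_denominators:
  fixes z e e' a b g \<alpha> \<beta> :: complex
  assumes "z \<noteq> 0" "1 - z \<noteq> 0"
    and "\<alpha> / z * e - (\<beta> + 1) / (1 - z) * e + e' = 1 / z * a + 1 / (z - 1) * b + g"
  shows "z * (1 - z) * e' = (1 - z) * (a - \<alpha> * e) - z * (b - (\<beta> + 1) * e) + z * (1 - z) * g"
proof -
  have "z - 1 \<noteq> 0"
    using assms(2) by simp
  have "(1 - z) * \<alpha> * e - z * (\<beta> + 1) * e + z * (1 - z) * e'
      = z * (1 - z) * (\<alpha> / z * e - (\<beta> + 1) / (1 - z) * e + e')"
    using assms(1,2) by (simp add: divide_simps)
  also have "\<dots> = z * (1 - z) * (1 / z * a + 1 / (z - 1) * b + g)"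
    by (simp only: assms(3))
  also have "\<dots> = (1 - z) * a - z * b + z * (1 - z) * g"
    using assms(1) \<open>z - 1 \<noteq> 0\<close> by (simp add: divide_simps) (simp add: algebra_simps)
  finally show ?thesis
    by algebra
qed

lemma transformed_ode:
  fixes A B Gz :: "complex^'n^'n" and h \<eta> :: "complex \<Rightarrow> complex^'n"
  assumes z: "0 < Re z" "Re z < 1"
    and S: "open S" "z \<in> S" "\<And>w. w \<in> S \<Longrightarrow> h w = (1 - w) powr (\<beta> + 1) *s \<eta> w"
    and \<eta>': "vec_has_cderiv \<eta> \<eta>' z"
    and ode: "vec_has_cderiv (\<lambda>w. w powr \<alpha> *s h w)
               ((mat (1 / z) ** A + mat (1 / (z - 1)) ** B + Gz) *v (z powr \<alpha> *s h z)) z"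
  shows "(z * (1 - z)) *s \<eta>' = (1 - z) *s ((A - mat \<alpha>) *v \<eta> z)
           - z *s ((B - mat (\<beta> + 1)) *v \<eta> z) + (z * (1 - z)) *s (Gz *v \<eta> z)"
proof -
  define c where "c = z powr \<alpha> * (1 - z) powr (\<beta> + 1)"
  have z0: "z \<noteq> 0" and z1: "1 - z \<noteq> 0"
    using z by auto
  then have "c \<noteq> 0"
    by (simp add: c_def powr_def)
  have y': "vec_has_cderiv (\<lambda>w. w powr \<alpha> *s h w)
          (c *s (\<alpha> / z *s \<eta> z - (\<beta> + 1) / (1 - z) *s \<eta> z + \<eta>')) z"
    unfolding c_def
    by (rule vec_has_cderiv_transform_within_open[OF vec_has_cderiv_powr_prefactor[OF z \<eta>'] S(1,2)])
       (simp add: S(3))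
  have ode_rhs: "(mat (1 / z) ** A + mat (1 / (z - 1)) ** B + Gz) *v (z powr \<alpha> *s h z)
      = c *s (1 / z *s (A *v \<eta> z) + 1 / (z - 1) *s (B *v \<eta> z) + Gz *v \<eta> z)"
    by (simp add: S(2,3) c_def vector_scalar_commute matrix_vector_mult_add_rdistrib
        flip: matrix_vector_mul_assoc) (simp add: matrix_vector_mult_mat algebra_simps)
  have scaled: "c *s (\<alpha> / z *s \<eta> z - (\<beta> + 1) / (1 - z) *s \<eta> z + \<eta>')
      = c *s (1 / z *s (A *v \<eta> z) + 1 / (z - 1) *s (B *v \<eta> z) + Gz *v \<eta> z)"
    using vec_has_cderiv_unique[OF y' ode[unfolded ode_rhs]] .
  have eq: "\<alpha> / z *s \<eta> z - (\<beta> + 1) / (1 - z) *s \<eta> z + \<eta>'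
      = 1 / z *s (A *v \<eta> z) + 1 / (z - 1) *s (B *v \<eta> z) + Gz *v \<eta> z"
    using arg_cong[OF scaled, of "\<lambda>v. inverse c *s v"]
    by (simp only: vector_smult_assoc left_inverse[OF \<open>c \<noteq> 0\<close>] vector_smult_lid)
  show ?thesis
  proof (rule vec_eq_iff[THEN iffD2], intro allI)
    fix i
    have "\<alpha> / z * \<eta> z $ i - (\<beta> + 1) / (1 - z) * \<eta> z $ i + \<eta>' $ i
        = 1 / z * (A *v \<eta> z) $ i + 1 / (z - 1) * (B *v \<eta> z) $ i + (Gz *v \<eta> z) $ i"
      using arg_cong[OF eq, of "\<lambda>v. v $ i"]
      by (simp only: vector_add_component vector_minus_component vector_smult_component)
    then have "z * (1 - z) * \<eta>' $ i = (1 - z) * ((A *v \<eta> z) $ i - \<alpha> * \<eta> z $ i)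
        - z * ((B *v \<eta> z) $ i - (\<beta> + 1) * \<eta> z $ i) + z * (1 - z) * (Gz *v \<eta> z) $ i"
      by (rule transformed_ode_clear_denominators[OF z0 z1])
    then show "((z * (1 - z)) *s \<eta>') $ i = ((1 - z) *s ((A - mat \<alpha>) *v \<eta> z)
           - z *s ((B - mat (\<beta> + 1)) *v \<eta> z) + (z * (1 - z)) *s (Gz *v \<eta> z)) $ i"
      by (simp add: matrix_vector_mult_diff_rdistrib matrix_vector_mult_mat) (simp add: algebra_simps)
  qed
qed

lemma fps_conv_radius_ge_1_if_sums:
  fixes c :: "nat \<Rightarrow> complex"
  assumes "\<And>z. norm z < 1 \<Longrightarrow> (\<lambda>k. c k * z ^ k) sums f z"
  shows "1 \<le> fps_conv_radius (Abs_fps c)"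
  unfolding fps_conv_radius_def fps_nth_Abs_fps
proof (rule conv_radius_geI_ex)
  fix r :: real
  assume "0 < r" "ereal r < 1"
  then have "(\<lambda>n. c n * complex_of_real r ^ n) sums f (complex_of_real r)"
    by (intro assms) simp
  with \<open>0 < r\<close> show "\<exists>z. norm z = r \<and> summable (\<lambda>n. c n * z ^ n)"
    by (intro exI[of _ "complex_of_real r"]) (auto dest: sums_summable)
qed

lemma eval_fps_Abs_fps_if_sums:
  fixes c :: "nat \<Rightarrow> complex"
  assumes "\<And>z. norm z < 1 \<Longrightarrow> (\<lambda>k. c k * z ^ k) sums f z" "norm z < 1"
  shows "eval_fps (Abs_fps c) z = f z"
proof -
  have "ereal (norm z) < 1"
    using assms(2) by simp
  also have "1 \<le> fps_conv_radius (Abs_fps c)"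
    using assms(1) by (rule fps_conv_radius_ge_1_if_sums)
  finally show ?thesis
    using sums_eval_fps assms sums_unique2 by fastforce
qed

lemma has_fps_expansion_eq_if_eq_on_open:
  fixes f g :: "complex \<Rightarrow> complex"
  assumes "f has_fps_expansion F" "g has_fps_expansion G"
    and "f holomorphic_on U" "g holomorphic_on U" "open U" "connected U" "0 \<in> U"
    and "open S" "S \<noteq> {}" "S \<subseteq> U" "\<And>z. z \<in> S \<Longrightarrow> f z = g z"
  shows "F = G"
proof -
  have "f z = g z" if "z \<in> U" for z
    using analytic_continuation_open[of S U f g z] assms that by blast
  then have "eventually (\<lambda>z. f z = g z) (nhds 0)"
    using eventually_nhds_in_open[OF assms(5,7)] by (auto elim: eventually_mono)
  then have "g has_fps_expansion F"
    using assms(1) has_fps_expansion_cong by blast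
  then show ?thesis
    using assms(2) by (rule fps_expansion_unique_complex)
qed

lemma fps_identity_if_transformed_ode:
  fixes E :: "'n::finite \<Rightarrow> complex fps" and \<Gamma> :: "'n \<Rightarrow> 'n \<Rightarrow> complex fps"
    and A0 A1 :: "complex^'n^'n"
  assumes E: "\<And>j. 1 \<le> fps_conv_radius (E j)" and \<Gamma>: "\<And>i j. 1 \<le> fps_conv_radius (\<Gamma> i j)"
    and S: "open S" "S \<noteq> {}" "S \<subseteq> ball 0 1"
    and ode: "\<And>z. z \<in> S \<Longrightarrow> (z * (1 - z)) *s (\<chi> j. eval_fps (fps_deriv (E j)) z)
        = (1 - z) *s (A0 *v (\<chi> j. eval_fps (E j) z)) - z *s (A1 *v (\<chi> j. eval_fps (E j) z))
          + (z * (1 - z)) *s ((\<chi> i j. eval_fps (\<Gamma> i j) z) *v (\<chi> j. eval_fps (E j) z))"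
  shows "fps_X * (1 - fps_X) * fps_deriv (E i)
      = (1 - fps_X) * (\<Sum>j\<in>UNIV. fps_const (A0 $ i $ j) * E j)
        - fps_X * (\<Sum>j\<in>UNIV. fps_const (A1 $ i $ j) * E j)
        + fps_X * (1 - fps_X) * (\<Sum>j\<in>UNIV. \<Gamma> i j * E j)"
proof (rule has_fps_expansion_eq_if_eq_on_open)
  have ball: "ball 0 1 \<subseteq> eball 0 R" if "1 \<le> R" for R :: ereal
    using ball_eball_mono[of 1 R 0] that by (simp add: one_ereal_def)
  have expansion: "eval_fps F has_fps_expansion F" if "1 \<le> fps_conv_radius F" for F :: "complex fps"
    by (intro eval_fps_has_fps_expansion order.strict_trans2[OF _ that]) simp
  have E': "1 \<le> fps_conv_radius (fps_deriv (E j))" for j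
    using E[of j] fps_conv_radius_deriv[of "E j"] by order
  show "(\<lambda>z. z * (1 - z) * eval_fps (fps_deriv (E i)) z)
      has_fps_expansion fps_X * (1 - fps_X) * fps_deriv (E i)"
    by (intro fps_expansion_intros expansion E')
  show "(\<lambda>z. (1 - z) * (\<Sum>j\<in>UNIV. A0 $ i $ j * eval_fps (E j) z)
        - z * (\<Sum>j\<in>UNIV. A1 $ i $ j * eval_fps (E j) z)
        + z * (1 - z) * (\<Sum>j\<in>UNIV. eval_fps (\<Gamma> i j) z * eval_fps (E j) z))
      has_fps_expansion (1 - fps_X) * (\<Sum>j\<in>UNIV. fps_const (A0 $ i $ j) * E j)
        - fps_X * (\<Sum>j\<in>UNIV. fps_const (A1 $ i $ j) * E j)
        + fps_X * (1 - fps_X) * (\<Sum>j\<in>UNIV. \<Gamma> i j * E j)"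
    by (intro fps_expansion_intros expansion E \<Gamma>)
  show "(\<lambda>z. z * (1 - z) * eval_fps (fps_deriv (E i)) z) holomorphic_on ball 0 1"
    by (intro holomorphic_intros ball E')
  show "(\<lambda>z. (1 - z) * (\<Sum>j\<in>UNIV. A0 $ i $ j * eval_fps (E j) z)
        - z * (\<Sum>j\<in>UNIV. A1 $ i $ j * eval_fps (E j) z)
        + z * (1 - z) * (\<Sum>j\<in>UNIV. eval_fps (\<Gamma> i j) z * eval_fps (E j) z))
      holomorphic_on ball 0 1"
    by (intro holomorphic_intros ball E \<Gamma>)
  show "z * (1 - z) * eval_fps (fps_deriv (E i)) z
      = (1 - z) * (\<Sum>j\<in>UNIV. A0 $ i $ j * eval_fps (E j) z)
        - z * (\<Sum>j\<in>UNIV. A1 $ i $ j * eval_fps (E j) z)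
        + z * (1 - z) * (\<Sum>j\<in>UNIV. eval_fps (\<Gamma> i j) z * eval_fps (E j) z)" if "z \<in> S" for z
    using arg_cong[OF ode[OF that], of "\<lambda>v. v $ i"]
    by (simp add: matrix_vector_mult_def left_diff_distrib)
qed (use S in auto)

definition backward_difference :: "(nat \<Rightarrow> 'a::ab_group_add) \<Rightarrow> nat \<Rightarrow> 'a" where
  "backward_difference d n = (if n = 0 then d 0 else d n - d (n - 1))"

lemma fps_one_minus_X_mult_Abs_fps:
  "(1 - fps_X) * Abs_fps f = Abs_fps (backward_difference (f :: nat \<Rightarrow> 'a::comm_ring_1))"
  by (rule fps_ext) (simp add: backward_difference_def algebra_simps)

lemma backward_difference_component:
  "backward_difference (\<lambda>k. d k $ j) = (\<lambda>k. backward_difference d k $ j)"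
  by (auto simp: backward_difference_def)

lemma fps_nth_matrix_vector_convolution:
  fixes Gk :: "nat \<Rightarrow> 'a::comm_semiring_1^'n^'m" and u :: "nat \<Rightarrow> 'a^'n"
  shows "fps_nth (\<Sum>j\<in>UNIV. Abs_fps (\<lambda>k. Gk k $ i $ j) * Abs_fps (\<lambda>k. u k $ j)) k
      = (\<Sum>l\<le>k. Gk (k - l) *v u l) $ i"
proof -
  have "fps_nth (\<Sum>j\<in>UNIV. Abs_fps (\<lambda>k. Gk k $ i $ j) * Abs_fps (\<lambda>k. u k $ j)) k
      = (\<Sum>j\<in>UNIV. \<Sum>m\<le>k. Gk m $ i $ j * u (k - m) $ j)"
    by (simp add: fps_sum_nth fps_mult_nth atLeast0AtMost)
  also have "\<dots> = (\<Sum>m\<le>k. (Gk m *v u (k - m)) $ i)"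
    by (subst sum.swap) (simp add: matrix_vector_mult_def)
  also have "\<dots> = (\<Sum>l\<le>k. (Gk (k - l) *v u l) $ i)"
    by (rule sum.reindex_bij_witness[of _ "\<lambda>l. k - l" "\<lambda>l. k - l"]) auto
  finally show ?thesis
    by (simp add: sum_component)
qed

lemma recurrence_if_fps_identity:
  fixes A0 A1 :: "'a::comm_ring_1^'n^'n" and Gk :: "nat \<Rightarrow> 'a^'n^'n" and d :: "nat \<Rightarrow> 'a^'n"
  assumes "\<And>i. fps_X * (1 - fps_X) * fps_deriv (Abs_fps (\<lambda>k. d k $ i))
      = (1 - fps_X) * (\<Sum>j\<in>UNIV. fps_const (A0 $ i $ j) * Abs_fps (\<lambda>k. d k $ j))
        - fps_X * (\<Sum>j\<in>UNIV. fps_const (A1 $ i $ j) * Abs_fps (\<lambda>k. d k $ j))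
        + fps_X * (1 - fps_X) * (\<Sum>j\<in>UNIV. Abs_fps (\<lambda>k. Gk k $ i $ j) * Abs_fps (\<lambda>k. d k $ j))"
  shows "(A0 - mat (of_nat (Suc k))) *v (d (Suc k) - d k)
      = (A1 + mat 1) *v d k - (\<Sum>l\<le>k. Gk (k - l) *v backward_difference d l)"
proof (rule vec_eq_iff[THEN iffD2], intro allI)
  fix i
  let ?E = "\<lambda>j. Abs_fps (\<lambda>k. d k $ j)"
  have "fps_nth (fps_X * (1 - fps_X) * fps_deriv (?E i)) (Suc k)
      = of_nat (Suc k) * d (Suc k) $ i - of_nat k * d k $ i"
    by (cases k) (simp_all add: algebra_simps)
  moreover have "fps_nth ((1 - fps_X) * (\<Sum>j\<in>UNIV. fps_const (A0 $ i $ j) * ?E j)) (Suc k)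
      = (A0 *v (d (Suc k) - d k)) $ i"
    by (simp add: algebra_simps fps_sum_nth matrix_vector_mult_def sum_subtractf)
  moreover have "fps_nth (fps_X * (\<Sum>j\<in>UNIV. fps_const (A1 $ i $ j) * ?E j)) (Suc k)
      = (A1 *v d k) $ i"
    by (simp add: fps_sum_nth matrix_vector_mult_def)
  moreover have "fps_nth (fps_X * (1 - fps_X) * (\<Sum>j\<in>UNIV. Abs_fps (\<lambda>k. Gk k $ i $ j) * ?E j)) (Suc k)
      = (\<Sum>l\<le>k. Gk (k - l) *v backward_difference d l) $ i"
  proof -
    have "fps_X * (1 - fps_X) * (\<Sum>j\<in>UNIV. Abs_fps (\<lambda>k. Gk k $ i $ j) * ?E j)
        = fps_X * (\<Sum>j\<in>UNIV. Abs_fps (\<lambda>k. Gk k $ i $ j) * ((1 - fps_X) * ?E j))"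
      by (simp add: sum_distrib_left mult_ac)
    then show ?thesis
      by (simp add: fps_one_minus_X_mult_Abs_fps backward_difference_component
          fps_nth_matrix_vector_convolution)
  qed
  ultimately have "of_nat (Suc k) * d (Suc k) $ i - of_nat k * d k $ i
      = (A0 *v (d (Suc k) - d k)) $ i - (A1 *v d k) $ i
        + (\<Sum>l\<le>k. Gk (k - l) *v backward_difference d l) $ i"
    using arg_cong[OF assms[of i], of "\<lambda>F. fps_nth F (Suc k)"] by simp
  then show "((A0 - mat (of_nat (Suc k))) *v (d (Suc k) - d k)) $ i
      = ((A1 + mat 1) *v d k - (\<Sum>l\<le>k. Gk (k - l) *v backward_difference d l)) $ i"
    by (simp add: matrix_vector_mult_diff_rdistrib matrix_vector_mult_add_rdistrib
        matrix_vector_mult_mat algebra_simps)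
qed

lemma ud_rec_eq_if_recurrence:
  fixes A0 A1 :: "complex^2^2" and Gk :: "nat \<Rightarrow> complex^2^2" and d :: "nat \<Rightarrow> complex^2"
  assumes inv: "\<And>k. invertible (A0 - mat (of_nat (Suc k)))"
    and rec: "\<And>k. (A0 - mat (of_nat (Suc k))) *v (d (Suc k) - d k)
      = (A1 + mat 1) *v d k - (\<Sum>l\<le>k. Gk (k - l) *v backward_difference d l)"
  shows "ud_rec A0 A1 Gk (d 0) k = (map (backward_difference d) [0..<Suc k], d k)"
proof (induction k)
  case 0
  show ?case
    by (simp add: backward_difference_def)
next
  case (Suc k)
  let ?M = "A0 - mat (of_nat (Suc k))"
  have "matrix_inv ?M *v ((A1 + mat 1) *v d k - (\<Sum>l\<le>k. Gk (k - l) *v backward_difference d l))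
      = matrix_inv ?M *v (?M *v (d (Suc k) - d k))"
    by (simp only: rec)
  also have "\<dots> = d (Suc k) - d k"
    by (simp only: matrix_vector_mul_assoc matrix_inv_left[OF inv] matrix_vector_mul_lid)
  finally have "matrix_inv ?M *v ((A1 + mat 1) *v d k - (\<Sum>l\<le>k. Gk (k - l) *v backward_difference d l))
      = d (Suc k) - d k" .
  moreover have "(\<Sum>l\<le>k. Gk (k - l) *v (map (backward_difference d) [0..<Suc k] ! l))
      = (\<Sum>l\<le>k. Gk (k - l) *v backward_difference d l)"
    by (intro sum.cong refl) (simp del: upt_Suc add: nth_map_upt)
  moreover have "backward_difference d (Suc k) = d (Suc k) - d k"
    by (simp add: backward_difference_def)
  moreover have "[0..<Suc (Suc k)] = [0..<Suc k] @ [Suc k]"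
    by simp
  ultimately show ?case
    using Suc.IH by (simp del: upt_Suc add: Let_def)
qed

lemma fps_of_vec_power_series:
  fixes d :: "nat \<Rightarrow> complex^'n"
  assumes "\<And>z. cmod z < 1 \<Longrightarrow> (\<lambda>k. z ^ k *s d k) sums f z"
  shows "1 \<le> fps_conv_radius (Abs_fps (\<lambda>k. d k $ j))"
    and "cmod z < 1 \<Longrightarrow> eval_fps (Abs_fps (\<lambda>k. d k $ j)) z = f z $ j"
proof -
  have sums: "(\<lambda>k. d k $ j * z ^ k) sums (f z $ j)" if "cmod z < 1" for z
    using bounded_linear.sums[OF bounded_linear_vec_nth assms[OF that]] by (simp add: mult.commute)
  show "1 \<le> fps_conv_radius (Abs_fps (\<lambda>k. d k $ j))"
    using sums by (rule fps_conv_radius_ge_1_if_sums)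
  show "eval_fps (Abs_fps (\<lambda>k. d k $ j)) z = f z $ j" if "cmod z < 1"
    using sums that by (rule eval_fps_Abs_fps_if_sums)
qed

lemma fps_of_mat_power_series:
  fixes Gk :: "nat \<Rightarrow> complex^'n^'m"
  assumes "\<And>z. cmod z < 1 \<Longrightarrow> (\<lambda>k. mat (z ^ k) ** Gk k) sums G z"
  shows "1 \<le> fps_conv_radius (Abs_fps (\<lambda>k. Gk k $ i $ j))"
    and "cmod z < 1 \<Longrightarrow> eval_fps (Abs_fps (\<lambda>k. Gk k $ i $ j)) z = G z $ i $ j"
proof -
  have row_sums: "(\<lambda>k. z ^ k *s Gk k $ i) sums (G z $ i)" if "cmod z < 1" for z
    using bounded_linear.sums[OF bounded_linear_vec_nth assms[OF that]]
    by (simp add: matrix_mult_mat_left_row)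
  then show "1 \<le> fps_conv_radius (Abs_fps (\<lambda>k. Gk k $ i $ j))"
    by (rule fps_of_vec_power_series(1))
  show "eval_fps (Abs_fps (\<lambda>k. Gk k $ i $ j)) z = G z $ i $ j" if "cmod z < 1"
    using row_sums that by (rule fps_of_vec_power_series(2))
qed

lemma transformed_ode_power_series:
  fixes A B :: "complex^'n^'n" and G :: "complex \<Rightarrow> complex^'n^'n" and Gk :: "nat \<Rightarrow> complex^'n^'n"
    and h :: "complex \<Rightarrow> complex^'n" and d :: "nat \<Rightarrow> complex^'n" and \<alpha> \<beta> :: complex
  assumes G_ser: "\<And>z. cmod z < 1 \<Longrightarrow> (\<lambda>k. mat (z ^ k) ** Gk k) sums G z"
    and ode: "vec_has_cderiv (\<lambda>w. w powr \<alpha> *s h w)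
          ((mat (1 / z) ** A + mat (1 / (z - 1)) ** B + G z) *v (z powr \<alpha> *s h z)) z"
    and d_ser: "\<And>z. cmod z < 1 \<Longrightarrow> (\<lambda>k. z ^ k *s d k) sums ((1 - z) powr (- \<beta> - 1) *s h z)"
    and z: "0 < Re z" "Re z < 1" "cmod z < 1"
  shows "(z * (1 - z)) *s (\<chi> j. eval_fps (fps_deriv (Abs_fps (\<lambda>k. d k $ j))) z)
      = (1 - z) *s ((A - mat \<alpha>) *v (\<chi> j. eval_fps (Abs_fps (\<lambda>k. d k $ j)) z))
        - z *s ((B - mat (\<beta> + 1)) *v (\<chi> j. eval_fps (Abs_fps (\<lambda>k. d k $ j)) z))
        + (z * (1 - z)) *s ((\<chi> i j. eval_fps (Abs_fps (\<lambda>k. Gk k $ i $ j)) z)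
            *v (\<chi> j. eval_fps (Abs_fps (\<lambda>k. d k $ j)) z))"
proof -
  define \<eta> where "\<eta> w = (\<chi> j. eval_fps (Abs_fps (\<lambda>k. d k $ j)) w)" for w
  have h_eq: "h w = (1 - w) powr (\<beta> + 1) *s \<eta> w" if "w \<in> ball 0 1" for w
  proof -
    have "1 - w \<noteq> 0"
      using that by auto
    then have inverse_powr: "(1 - w) powr (\<beta> + 1) * (1 - w) powr (- \<beta> - 1) = 1"
      by (simp add: powr_def flip: exp_add) (simp add: algebra_simps)
    have "\<eta> w = (1 - w) powr (- \<beta> - 1) *s h w"
      using fps_of_vec_power_series(2)[OF d_ser] that unfolding \<eta>_def by (simp add: vec_eq_iff)
    then show ?thesis
      by (simp add: vector_smult_assoc inverse_powr)
  qed
  have "ereal (cmod z) < fps_conv_radius (Abs_fps (\<lambda>k. d k $ j))" for j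
    using order.strict_trans2[OF _ fps_of_vec_power_series(1)[OF d_ser]] z(3) by simp
  then have \<eta>': "vec_has_cderiv \<eta> (\<chi> j. eval_fps (fps_deriv (Abs_fps (\<lambda>k. d k $ j))) z) z"
    unfolding vec_has_cderiv_def \<eta>_def by (simp add: has_field_derivative_eval_fps)
  have G_eq: "(\<chi> i j. eval_fps (Abs_fps (\<lambda>k. Gk k $ i $ j)) z) = G z"
    using fps_of_mat_power_series(2)[OF G_ser z(3)] by (simp add: vec_eq_iff)
  have "z \<in> ball 0 1"
    using z(3) by simp
  from transformed_ode[OF z(1,2) open_ball this h_eq \<eta>' ode] show ?thesis
    unfolding \<eta>_def G_eq .
qed

lemma coefficient_recurrence_if_transformed_ode:
  fixes A B :: "complex^'n^'n" and G :: "complex \<Rightarrow> complex^'n^'n" and Gk :: "nat \<Rightarrow> complex^'n^'n"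
    and h :: "complex \<Rightarrow> complex^'n" and d :: "nat \<Rightarrow> complex^'n" and \<alpha> \<beta> :: complex
  assumes G_ser: "\<And>z. cmod z < 1 \<Longrightarrow> (\<lambda>k. mat (z ^ k) ** Gk k) sums G z"
    and ode: "\<And>z. 0 < Re z \<Longrightarrow> Re z < 1 \<Longrightarrow> cmod z < 1 \<Longrightarrow>
        vec_has_cderiv (\<lambda>w. w powr \<alpha> *s h w)
          ((mat (1 / z) ** A + mat (1 / (z - 1)) ** B + G z) *v (z powr \<alpha> *s h z)) z"
    and d_ser: "\<And>z. cmod z < 1 \<Longrightarrow> (\<lambda>k. z ^ k *s d k) sums ((1 - z) powr (- \<beta> - 1) *s h z)"
  shows "(A - mat \<alpha> - mat (of_nat (Suc k))) *v (d (Suc k) - d k)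
      = (B - mat (\<beta> + 1) + mat 1) *v d k - (\<Sum>l\<le>k. Gk (k - l) *v backward_difference d l)"
proof (rule recurrence_if_fps_identity, rule fps_identity_if_transformed_ode)
  define S where "S = {z. 0 < Re z} \<inter> {z. Re z < 1} \<inter> ball (0::complex) 1"
  show "open S"
    by (simp add: S_def open_Int open_halfspace_Re_gt open_halfspace_Re_lt)
  have "1 / 2 \<in> S"
    by (simp add: S_def)
  then show "S \<noteq> {}"
    by blast
  show "S \<subseteq> ball 0 1"
    by (auto simp: S_def)
  show "(z * (1 - z)) *s (\<chi> j. eval_fps (fps_deriv (Abs_fps (\<lambda>k. d k $ j))) z)
      = (1 - z) *s ((A - mat \<alpha>) *v (\<chi> j. eval_fps (Abs_fps (\<lambda>k. d k $ j)) z))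
        - z *s ((B - mat (\<beta> + 1)) *v (\<chi> j. eval_fps (Abs_fps (\<lambda>k. d k $ j)) z))
        + (z * (1 - z)) *s ((\<chi> i j. eval_fps (Abs_fps (\<lambda>k. Gk k $ i $ j)) z)
            *v (\<chi> j. eval_fps (Abs_fps (\<lambda>k. d k $ j)) z))" if "z \<in> S" for z
    using that unfolding S_def
    by (intro transformed_ode_power_series[OF G_ser ode d_ser]) auto
  show "1 \<le> fps_conv_radius (Abs_fps (\<lambda>k. d k $ j))" for j
    by (rule fps_of_vec_power_series(1)[OF d_ser])
  show "1 \<le> fps_conv_radius (Abs_fps (\<lambda>k. Gk k $ i $ j))" for i j
    by (rule fps_of_mat_power_series(1)[OF G_ser])
qed

theorem lemma2:
  fixes r :: ereal
    and A B :: "complex^2^2"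
    and G :: "complex \<Rightarrow> complex^2^2"
    and Gk :: "nat \<Rightarrow> complex^2^2"
    and a0 :: "complex^2"
    and \<alpha>0 \<beta>1 :: complex
    and h0 :: "complex \<Rightarrow> complex^2"
    and d :: "nat \<Rightarrow> complex^2"
  assumes r: "1 < r"
    and G_hol: "mat_holomorphic_on G {z. ereal (cmod z) < r}"
    and G_ser: "\<And>z. cmod z < 1 \<Longrightarrow> (\<lambda>k. mat (z ^ k) ** Gk k) sums G z"
    and a0_ne: "a0 \<noteq> 0"
    and a0_eig: "A *v a0 = \<alpha>0 *s a0"
    and inv: "\<And>k::nat. k \<ge> 1 \<Longrightarrow> invertible (A - mat (\<alpha>0 + of_nat k))"
    and \<beta>1_eig: "\<exists>v. v \<noteq> 0 \<and> B *v v = \<beta>1 *s v"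
    and h0_hol: "vec_holomorphic_on h0 ({z. ereal (cmod z) < r} - {z. z \<in> \<real> \<and> 1 \<le> Re z})"
    and h0_0: "h0 0 = a0"
    and y0_ode: "\<And>z. z \<in> {z. ereal (cmod z) < r} - {z. z \<in> \<real> \<and> (Re z \<le> 0 \<or> 1 \<le> Re z)} \<Longrightarrow>
        vec_has_cderiv (\<lambda>w. (w powr \<alpha>0) *s h0 w)
          ((mat (1 / z) ** A + mat (1 / (z - 1)) ** B + G z) *v ((z powr \<alpha>0) *s h0 z)) z"
    and d_ser: "\<And>z. cmod z < 1 \<Longrightarrow>
        (\<lambda>k. (z ^ k) *s d k) sums (((1 - z) powr (- \<beta>1 - 1)) *s h0 z)"
  shows "\<forall>k. d k = rec_d (A - mat \<alpha>0) (B - mat (\<beta>1 + 1)) Gk a0 k"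
proof -
  have rec: "(A - mat \<alpha>0 - mat (of_nat (Suc k))) *v (d (Suc k) - d k)
      = (B - mat (\<beta>1 + 1) + mat 1) *v d k - (\<Sum>l\<le>k. Gk (k - l) *v backward_difference d l)" for k
  proof (rule coefficient_recurrence_if_transformed_ode[OF G_ser _ d_ser])
    fix z :: complex
    assume z: "0 < Re z" "Re z < 1" "cmod z < 1"
    have "ereal (cmod z) < 1"
      using z(3) by simp
    then have "ereal (cmod z) < r"
      using r by (rule less_trans)
    with z show "vec_has_cderiv (\<lambda>w. w powr \<alpha>0 *s h0 w)
        ((mat (1 / z) ** A + mat (1 / (z - 1)) ** B + G z) *v (z powr \<alpha>0 *s h0 z)) z"
      by (intro y0_ode) auto
  qed
  have "(\<lambda>k. (0::complex) ^ k *s d k) = (\<lambda>k. if k = 0 then d 0 else 0)"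
    by (rule ext) (simp add: power_0_left)
  then have "(\<lambda>k. (0::complex) ^ k *s d k) sums d 0"
    using sums_single[of 0 "\<lambda>_. d 0"] by simp
  then have d0: "d 0 = a0"
    using d_ser[of 0] h0_0 sums_unique2 by force
  have "invertible (A - mat \<alpha>0 - mat (of_nat (Suc k)))" for k
    using inv[of "Suc k"] by (simp add: mat_add diff_diff_eq)
  from ud_rec_eq_if_recurrence[OF this rec] d0 show ?thesis
    by (simp add: rec_d_def)
qed

end
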